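(* Let $k$ be a field of characteristic $0$, $R=k[x_1,\dots,x_n]$ acting on $S=k[X_1,\dots,X_n]$ by differentiation ($x_i\circ F=\partial F/\partial X_i$), and let $\ell=x_1+\dots+x_n$. For any monomial $M\in S$ and any integer $d\ge 0$, the Artinian Gorenstein algebra $R/\operatorname{Ann}(\ell^d\circ M)$ has the strong Lefschetz property. In particular, for every elementary symmetric polynomial $e_d(X_1,\dots,X_n)$, $0\le d\le n$, the algebra $R/\operatorname{Ann}(e_d(X_1,\dots,X_n))$ has the strong Lefschetz property.
   Context: For $B\subseteq S$, $\operatorname{Ann}(B)=\{f\in R\mid f\circ b=0\ \forall b\in B\}$. For a homogeneous $F\in S$, $R/\operatorname{Ann}(F)$ is the Artinian Gorenstein algebra with dual generator $F$. A graded Artinian $k$-algebra $A$ has the strong Lefschetz property if there exists $\ell\in A_1$ such that for all $i$ and $j\ge0$ the multiplication map $\cdot\ell^j\colon A_i\to A_{i+j}$ is injective or surjective. *)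

theory Defs
  imports Main "HOL-Library.Poly_Mapping"
begin

text \<open>Polynomials over a field 'a in the variables indexed by a finite type 'n
  (so n = CARD('n) is an arbitrary fixed number of variables).
  A monomial is an exponent vector of type of finitely supported maps 'n to nat; a polynomial is a
  finitely supported map from monomials to coefficients (product = convolution).
  The same type serves both as R = k[x_1..x_n] and as S = k[X_1..X_n].\<close>

type_synonym ('n, 'a) mpoly = "('n \<Rightarrow>\<^sub>0 nat) \<Rightarrow>\<^sub>0 'a"

definition mdeg :: "('n::finite \<Rightarrow>\<^sub>0 nat) \<Rightarrow> nat" where
  "mdeg m = (\<Sum>i\<in>UNIV. Poly_Mapping.lookup m i)"

definition var :: "'n \<Rightarrow> ('n, 'a::{zero,one}) mpoly" where
  "var i = Poly_Mapping.single (Poly_Mapping.single i 1) 1"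

definition monom :: "('n \<Rightarrow>\<^sub>0 nat) \<Rightarrow> ('n, 'a::{zero,one}) mpoly" where
  "monom b = Poly_Mapping.single b 1"

text \<open>Homogeneous of degree d (the zero polynomial is homogeneous of every degree).\<close>
definition homog :: "nat \<Rightarrow> ('n::finite, 'a::zero) mpoly \<Rightarrow> bool" where
  "homog d f \<longleftrightarrow> (\<forall>m\<in>Poly_Mapping.keys f. mdeg m = d)"

text \<open>Action of R on S by differentiation, x_i \<circ> F = dF/dX_i, extended to all of R.
  On monomials: x^a \<circ> X^b = (\<Prod>i. b_i!/(b_i-a_i)!) X^(b-a) if a \<le> b componentwise,
  and 0 otherwise; this is exactly the iterated partial derivative
  (\<partial>/\<partial>X_1)^(a_1) ... (\<partial>/\<partial>X_n)^(a_n) X^b.\<close>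
definition act :: "('n::finite, 'a::field) mpoly \<Rightarrow> ('n, 'a) mpoly \<Rightarrow> ('n, 'a) mpoly" where
  "act f F = (\<Sum>a\<in>Poly_Mapping.keys f. \<Sum>b\<in>Poly_Mapping.keys F.
      if (\<forall>i. Poly_Mapping.lookup a i \<le> Poly_Mapping.lookup b i)
      then Poly_Mapping.single (b - a)
             (Poly_Mapping.lookup f a * Poly_Mapping.lookup F b *
              of_nat (\<Prod>i\<in>UNIV. fact (Poly_Mapping.lookup b i) div fact (Poly_Mapping.lookup b i - Poly_Mapping.lookup a i)))
      else 0)"

definition Ann :: "('n::finite, 'a::field) mpoly \<Rightarrow> ('n, 'a) mpoly set" where
  "Ann F = {f. act f F = 0}"

text \<open>Strong Lefschetz property of the graded quotient A = R/I, for a homogeneous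
  ideal I.  The graded piece A_i is R_i/(I \<inter> R_i); an element of A_1 is the class
  of a linear form L.  Multiplication by L^j : A_i \<rightarrow> A_(i+j) is
  injective: f \<in> R_i and L^j f \<in> I imply f \<in> I;
  surjective: every g \<in> R_(i+j) is congruent mod I to L^j f for some f \<in> R_i.\<close>
definition SLP_quot :: "('n::finite, 'a::field) mpoly set \<Rightarrow> bool" where
  "SLP_quot I \<longleftrightarrow> (\<exists>L. homog 1 L \<and>
     (\<forall>i j. (\<forall>f. homog i f \<and> L ^ j * f \<in> I \<longrightarrow> f \<in> I) \<or>
            (\<forall>g. homog (i + j) g \<longrightarrow> (\<exists>f. homog i f \<and> g - L ^ j * f \<in> I))))"

definition elem_sym :: "nat \<Rightarrow> ('n::finite, 'a::field) mpoly" where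
  "elem_sym d = (\<Sum>T\<in>{T. card T = d}. monom (\<Sum>i\<in>T. Poly_Mapping.single i 1))"

end

theory Submission
  imports Defs
begin

text \<open>
  Let \<open>V\<close> be the span of the monomials dividing \<open>X^b\<close>, graded by degree, and \<open>m = |b|\<close>.
  On \<open>V\<close>, differentiation by \<open>\<ell>\<close> lowers the degree by one, while
  \<open>U X^c = \<Sum>\<^sub>i (b\<^sub>i - c\<^sub>i) X^(c + e\<^sub>i)\<close> raises it, and their commutator acts on \<open>V\<^sub>s\<close> as
  multiplication by \<open>m - 2s\<close>. From this \<open>sl\<^sub>2\<close>-relation, \<open>\<ell>^r \<circ> U^r w\<close> is a nonzero multiple
  of \<open>w\<close> whenever \<open>w \<in> V\<^sub>t\<close> is killed by \<open>\<ell>\<close> and \<open>2t + r \<le> m\<close>; by induction on \<open>t\<close> this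
  gives hard Lefschetz for \<open>V\<close>: \<open>\<ell>^r \<circ> _\<close> maps \<open>V\<^sub>t\<^sub>+\<^sub>r\<close> onto \<open>V\<^sub>t\<close> whenever \<open>2t + r \<le> m\<close>.

  Every element of \<open>V\<^sub>k\<close> is \<open>h \<circ> X^b\<close> with \<open>h\<close> of degree \<open>m - k\<close>, and the degree \<open>i\<close> piece
  of \<open>R/Ann(F)\<close>, \<open>F = \<ell>^d \<circ> X^b\<close>, is isomorphic to \<open>R\<^sub>i \<circ> F\<close>. So multiplication by \<open>\<ell>^j\<close> is
  injective on degree \<open>i\<close> when \<open>2i + d + j \<le> m\<close> and surjective otherwise, both by hard
  Lefschetz for \<open>V\<close>. Finally \<open>e\<^sub>d\<close> is a nonzero multiple of \<open>\<ell>^(n-d) \<circ> X\<^sub>1\<cdots>X\<^sub>n\<close>.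
\<close>

abbreviation lookup :: "('a \<Rightarrow>\<^sub>0 'b::zero) \<Rightarrow> 'a \<Rightarrow> 'b" where
  "lookup \<equiv> Poly_Mapping.lookup"

abbreviation keys :: "('a \<Rightarrow>\<^sub>0 'b::zero) \<Rightarrow> 'a set" where
  "keys \<equiv> Poly_Mapping.keys"

abbreviation single :: "'a \<Rightarrow> 'b \<Rightarrow> 'a \<Rightarrow>\<^sub>0 'b::zero" where
  "single \<equiv> Poly_Mapping.single"

abbreviation scalar :: "'a \<Rightarrow> ('n, 'a::zero) mpoly" where
  "scalar u \<equiv> single 0 u"

section \<open>The apolarity action\<close>

definition deriv_coeff :: "('n::finite \<Rightarrow>\<^sub>0 nat) \<Rightarrow> ('n \<Rightarrow>\<^sub>0 nat) \<Rightarrow> nat" where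
  "deriv_coeff b a = (\<Prod>i\<in>UNIV. fact (lookup b i) div fact (lookup b i - lookup a i))"

lemma le_and_diff_eq_iff:
  fixes a b c :: "'n \<Rightarrow>\<^sub>0 nat"
  shows "((\<forall>i. lookup a i \<le> lookup b i) \<and> b - a = c) \<longleftrightarrow> b = c + a"
  by (auto simp: lookup_add lookup_minus intro!: poly_mapping_eqI)

lemma lookup_act:
  fixes f G :: "('n::finite, 'a::field) mpoly"
  shows "lookup (act f G) c = (\<Sum>a\<in>keys f. lookup f a * lookup G (c + a) * of_nat (deriv_coeff (c + a) a))"
proof -
  have "(\<Sum>b\<in>keys G. lookup (if \<forall>i. lookup a i \<le> lookup b i
          then single (b - a) (lookup f a * lookup G b * of_nat (deriv_coeff b a)) else 0) c)
      = lookup f a * lookup G (c + a) * of_nat (deriv_coeff (c + a) a)" for a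
  proof -
    have "(\<Sum>b\<in>keys G. lookup (if \<forall>i. lookup a i \<le> lookup b i
            then single (b - a) (lookup f a * lookup G b * of_nat (deriv_coeff b a)) else 0) c)
        = (\<Sum>b\<in>keys G. if b = c + a then lookup f a * lookup G b * of_nat (deriv_coeff b a) else 0)"
      using le_and_diff_eq_iff[of a _ c] by (intro sum.cong) (auto simp: lookup_single when_def)
    also have "\<dots> = lookup f a * lookup G (c + a) * of_nat (deriv_coeff (c + a) a)"
      by (simp add: sum.delta' in_keys_iff)
    finally show ?thesis .
  qed
  then show ?thesis
    unfolding act_def lookup_sum deriv_coeff_def by simp
qed

lemma lookup_act_supset:
  fixes f G :: "('n::finite, 'a::field) mpoly"
  assumes "finite K" "keys f \<subseteq> K"
  shows "lookup (act f G) c = (\<Sum>a\<in>K. lookup f a * lookup G (c + a) * of_nat (deriv_coeff (c + a) a))"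
  unfolding lookup_act
  by (rule sum.mono_neutral_left) (use assms in \<open>auto simp: in_keys_iff\<close>)

lemma lookup_act_single:
  fixes G :: "('n::finite, 'a::field) mpoly"
  shows "lookup (act (single a u) G) c = u * lookup G (c + a) * of_nat (deriv_coeff (c + a) a)"
  by (subst lookup_act_supset[where K = "{a}"]) (auto simp: lookup_single)

lemma act_zero_left [simp]: "act 0 G = 0"
  by (simp add: act_def)

lemma act_zero_right [simp]: "act f 0 = 0"
  by (simp add: act_def)

lemma act_add_left:
  fixes f g G :: "('n::finite, 'a::field) mpoly"
  shows "act (f + g) G = act f G + act g G"
proof (rule poly_mapping_eqI)
  fix c
  have K: "finite (keys f \<union> keys g)" by simp
  show "lookup (act (f + g) G) c = lookup (act f G + act g G) c"
    unfolding lookup_add lookup_act_supset[OF K keys_add] lookup_act_supset[OF K Un_upper1]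
      lookup_act_supset[OF K Un_upper2]
    by (simp add: lookup_add sum.distrib algebra_simps)
qed

lemma act_add_right:
  fixes f G H :: "('n::finite, 'a::field) mpoly"
  shows "act f (G + H) = act f G + act f H"
  by (rule poly_mapping_eqI) (simp add: lookup_act lookup_add sum.distrib algebra_simps)

lemma act_sum_left:
  fixes G :: "('n::finite, 'a::field) mpoly"
  shows "act (\<Sum>x\<in>A. f x) G = (\<Sum>x\<in>A. act (f x) G)"
  by (induction A rule: infinite_finite_induct) (auto simp: act_add_left)

lemma act_sum_right:
  fixes f :: "('n::finite, 'a::field) mpoly"
  shows "act f (\<Sum>x\<in>A. H x) = (\<Sum>x\<in>A. act f (H x))"
  by (induction A rule: infinite_finite_induct) (auto simp: act_add_right)

lemma act_diff_left:
  fixes f g G :: "('n::finite, 'a::field) mpoly"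
  shows "act (f - g) G = act f G - act g G"
  by (metis act_add_left add_diff_cancel eq_diff_eq)

lemma act_diff_right:
  fixes f G H :: "('n::finite, 'a::field) mpoly"
  shows "act f (G - H) = act f G - act f H"
  by (metis act_add_right add_diff_cancel eq_diff_eq)

lemma lookup_scalar_mult: "lookup (scalar u * G) k = (u::'a::comm_ring_1) * lookup (G :: ('n, 'a) mpoly) k"
  by (simp flip: mult_map_scale_conv_mult add: Poly_Mapping.map.rep_eq when_def)

lemma act_scalar_mult_right:
  fixes f G :: "('n::finite, 'a::field) mpoly"
  shows "act f (scalar u * G) = scalar u * act f G"
  by (rule poly_mapping_eqI) (unfold lookup_act lookup_scalar_mult, simp add: sum_distrib_left mult_ac)

lemma poly_mapping_sum_single: "f = (\<Sum>a\<in>keys f. single a (lookup f a))"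
  by (rule poly_mapping_eqI) (simp add: lookup_sum lookup_single when_def in_keys_iff sum.delta)

lemma fact_div_fact_mult:
  assumes "p \<le> q" "q \<le> r"
  shows "fact r div fact p = (fact r div fact q) * (fact q div (fact p :: nat))"
proof -
  obtain k where k: "fact r = fact q * (k::nat)" using fact_dvd[OF assms(2)] by (erule dvdE)
  obtain l where l: "fact q = fact p * (l::nat)" using fact_dvd[OF assms(1)] by (erule dvdE)
  show ?thesis by (simp add: k l mult.assoc)
qed

lemma deriv_coeff_add:
  fixes c a a' :: "'n::finite \<Rightarrow>\<^sub>0 nat"
  shows "deriv_coeff (c + a + a') (a + a') = deriv_coeff (c + a + a') a' * deriv_coeff (c + a) a"
  unfolding deriv_coeff_def prod.distrib[symmetric]
proof (rule prod.cong[OF refl])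
  fix i
  have "lookup (c + a + a') i - lookup (a + a') i = lookup c i"
    "lookup (c + a + a') i - lookup a' i = lookup c i + lookup a i"
    "lookup (c + a) i - lookup a i = lookup c i"
    by (simp_all add: lookup_add)
  then show "fact (lookup (c + a + a') i) div fact (lookup (c + a + a') i - lookup (a + a') i) =
      fact (lookup (c + a + a') i) div fact (lookup (c + a + a') i - lookup a' i) *
      (fact (lookup (c + a) i) div fact (lookup (c + a) i - lookup a i) :: nat)"
    by (simp only: lookup_add) (rule fact_div_fact_mult; simp)
qed

lemma act_single_mult_single:
  fixes G :: "('n::finite, 'a::field) mpoly"
  shows "act (single a u * single a' u') G = act (single a u) (act (single a' u') G)"
proof (rule poly_mapping_eqI)
  fix c
  show "lookup (act (single a u * single a' u') G) c = lookup (act (single a u) (act (single a' u') G)) c"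
    unfolding mult_single lookup_act_single using deriv_coeff_add[of c a a']
    by (simp add: add.assoc add.commute add.left_commute mult_ac)
qed

lemma act_mult:
  fixes f g G :: "('n::finite, 'a::field) mpoly"
  shows "act (f * g) G = act f (act g G)"
proof -
  have "f * g = (\<Sum>a\<in>keys f. \<Sum>a'\<in>keys g. single a (lookup f a) * single a' (lookup g a'))"
    by (subst poly_mapping_sum_single[of f], subst poly_mapping_sum_single[of g], rule sum_product)
  then have "act (f * g) G
      = (\<Sum>a\<in>keys f. act (single a (lookup f a)) (\<Sum>a'\<in>keys g. act (single a' (lookup g a')) G))"
    by (simp only: act_sum_left act_sum_right act_single_mult_single)
  also have "\<dots> = act (\<Sum>a\<in>keys f. single a (lookup f a)) (act (\<Sum>a'\<in>keys g. single a' (lookup g a')) G)"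
    by (simp only: act_sum_left)
  also have "\<dots> = act f (act g G)"
    by (simp only: flip: poly_mapping_sum_single)
  finally show ?thesis .
qed

lemma act_one [simp]:
  fixes G :: "('n::finite, 'a::field) mpoly"
  shows "act 1 G = G"
  by (rule poly_mapping_eqI) (use lookup_act_single[of 0 1 G] in \<open>simp add: deriv_coeff_def flip: single_one\<close>)

lemma mdeg_add: "mdeg (a + b) = mdeg a + mdeg (b :: 'n::finite \<Rightarrow>\<^sub>0 nat)"
  by (simp add: mdeg_def lookup_add sum.distrib)

lemma mdeg_single: "mdeg (single i k :: 'n::finite \<Rightarrow>\<^sub>0 nat) = k"
  by (simp add: mdeg_def lookup_single when_def)

lemma mdeg_diff:
  assumes "\<forall>i. lookup c i \<le> lookup b i"
  shows "mdeg (b - c) = mdeg b - mdeg (c :: 'n::finite \<Rightarrow>\<^sub>0 nat)"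
proof -
  have "b - c + c = b" using assms by (auto intro!: poly_mapping_eqI simp: lookup_add lookup_minus)
  then show ?thesis by (metis mdeg_add add_diff_cancel_right')
qed

lemma homog_zero [simp]: "homog d (0 :: ('n::finite, 'a::zero) mpoly)"
  by (simp add: homog_def)

lemma homog_add:
  "homog d f \<Longrightarrow> homog d g \<Longrightarrow> homog d (f + g :: ('n::finite, 'a::monoid_add) mpoly)"
  unfolding homog_def using keys_add[of f g] by blast

lemma homog_diff:
  "homog d f \<Longrightarrow> homog d g \<Longrightarrow> homog d (f - g :: ('n::finite, 'a::ab_group_add) mpoly)"
  using homog_add[of d f "- g"] by (simp add: homog_def)

lemma homog_sum:
  "(\<And>x. x \<in> A \<Longrightarrow> homog d (f x)) \<Longrightarrow> homog d (\<Sum>x\<in>A. f x :: ('n::finite, 'a::comm_monoid_add) mpoly)"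
  by (induction A rule: infinite_finite_induct) (auto intro: homog_add)

lemma homog_single: "homog (mdeg a) (single a u :: ('n::finite, 'a::zero) mpoly)"
  by (simp add: homog_def)

lemma homog_monom: "homog (mdeg b) (monom b :: ('n::finite, 'a::field) mpoly)"
  unfolding monom_def by (rule homog_single)

lemma homog_scalar_mult:
  "homog d f \<Longrightarrow> homog d (scalar u * f :: ('n::finite, 'a::field) mpoly)"
  unfolding homog_def by (auto simp: in_keys_iff lookup_scalar_mult)

lemma homog_mult:
  assumes "homog p f" "homog q g"
  shows "homog (p + q) (f * g :: ('n::finite, 'a::field) mpoly)"
  unfolding homog_def
proof
  fix m assume "m \<in> keys (f * g)"
  then obtain a b where "m = a + b" "a \<in> keys f" "b \<in> keys g" using keys_mult by blast
  then show "mdeg m = p + q" using assms by (simp add: homog_def mdeg_add)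
qed

lemma homog_power:
  assumes "homog p f"
  shows "homog (p * k) (f ^ k :: ('n::finite, 'a::field) mpoly)"
proof (induction k)
  case 0
  then show ?case by (simp add: homog_def mdeg_def)
next
  case (Suc k)
  then show ?case using homog_mult[OF assms Suc] by (simp add: add.commute)
qed

lemma lookup_act_homog_nonzero:
  fixes f G :: "('n::finite, 'a::field) mpoly"
  assumes "homog p f" "homog q G" "lookup (act f G) c \<noteq> 0"
  shows "p \<le> q \<and> mdeg c = q - p"
proof -
  obtain a where a: "a \<in> keys f" "lookup f a * lookup G (c + a) * of_nat (deriv_coeff (c + a) a) \<noteq> 0"
    using assms(3) unfolding lookup_act by (meson sum.not_neutral_contains_not_neutral)
  then have "c + a \<in> keys G" by (auto simp: in_keys_iff)
  then show ?thesis using a(1) assms(1,2) by (auto simp: homog_def mdeg_add)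
qed

lemma homog_act:
  fixes f G :: "('n::finite, 'a::field) mpoly"
  assumes "homog p f" "homog q G"
  shows "homog (q - p) (act f G)"
  unfolding homog_def using lookup_act_homog_nonzero[OF assms] by (auto simp: in_keys_iff)

lemma act_homog_eq_zero:
  fixes f G :: "('n::finite, 'a::field) mpoly"
  assumes "homog p f" "homog q G" "q < p"
  shows "act f G = 0"
  by (rule poly_mapping_eqI) (use lookup_act_homog_nonzero[OF assms(1,2)] assms(3) in force)

definition ell :: "('n::finite, 'a::field) mpoly" where
  "ell = (\<Sum>i\<in>UNIV. var i)"

lemma homog_ell: "homog 1 (ell :: ('n::finite, 'a::field) mpoly)"
  unfolding ell_def var_def by (rule homog_sum) (metis homog_single mdeg_single)

lemma homog_ell_power: "homog k (ell ^ k :: ('n::finite, 'a::field) mpoly)"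
  using homog_power[OF homog_ell, of k] by simp

lemma lookup_act_ell:
  fixes G :: "('n::finite, 'a::field) mpoly"
  shows "lookup (act ell G) c = (\<Sum>i\<in>UNIV. of_nat (lookup c i + 1) * lookup G (c + single i 1))"
proof -
  have "deriv_coeff (c + single i 1) (single i 1) = lookup c i + 1" for i
  proof -
    have "deriv_coeff (c + single i 1) (single i 1) = (\<Prod>j\<in>UNIV. if j = i then lookup c i + 1 else 1)"
      unfolding deriv_coeff_def by (rule prod.cong) (auto simp: lookup_add lookup_single when_def)
    then show ?thesis by simp
  qed
  then show ?thesis
    unfolding ell_def act_sum_left lookup_sum var_def lookup_act_single by (simp add: mult_ac)
qed

definition in_box :: "('n \<Rightarrow>\<^sub>0 nat) \<Rightarrow> ('n, 'a::zero) mpoly \<Rightarrow> bool" where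
  "in_box b G \<longleftrightarrow> (\<forall>c\<in>keys G. \<forall>i. lookup c i \<le> lookup b i)"

lemma in_box_zero [simp]: "in_box b 0"
  by (simp add: in_box_def)

lemma in_box_add: "in_box b f \<Longrightarrow> in_box b g \<Longrightarrow> in_box b (f + g :: ('n, 'a::monoid_add) mpoly)"
  unfolding in_box_def using keys_add[of f g] by blast

lemma in_box_diff: "in_box b f \<Longrightarrow> in_box b g \<Longrightarrow> in_box b (f - g :: ('n, 'a::ab_group_add) mpoly)"
  using in_box_add[of b f "- g"] by (simp add: in_box_def)

lemma in_box_scalar_mult: "in_box b f \<Longrightarrow> in_box b (scalar u * f :: ('n, 'a::field) mpoly)"
  unfolding in_box_def by (auto simp: in_keys_iff lookup_scalar_mult)

lemma in_box_monom: "in_box b (monom b :: ('n::finite, 'a::field) mpoly)"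
  unfolding monom_def in_box_def by simp

lemma in_box_act:
  fixes f G :: "('n::finite, 'a::field) mpoly"
  assumes "in_box b G"
  shows "in_box b (act f G)"
  unfolding in_box_def
proof (intro ballI allI)
  fix c i assume "c \<in> keys (act f G)"
  then obtain a where "lookup f a * lookup G (c + a) * of_nat (deriv_coeff (c + a) a) \<noteq> 0"
    unfolding in_keys_iff lookup_act by (meson sum.not_neutral_contains_not_neutral)
  then have "c + a \<in> keys G" by (simp add: in_keys_iff)
  then have "lookup (c + a) i \<le> lookup b i" using assms unfolding in_box_def by blast
  then show "lookup c i \<le> lookup b i" by (simp add: lookup_add)
qed

section \<open>An \<open>sl\<^sub>2\<close>-action on the box\<close>

lemma scalar_mult_scalar_mult: "scalar a * (scalar b * X) = scalar (a * b) * (X :: ('n, 'a::field) mpoly)"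
  by (simp add: mult_single mult.assoc[symmetric])

lemma diff_single_add_single: "0 < lookup c i \<Longrightarrow> c - single i 1 + single i 1 = (c :: 'n \<Rightarrow>\<^sub>0 nat)"
  by (rule poly_mapping_eqI) (auto simp: lookup_add lookup_minus lookup_single when_def)

text \<open>The raising operator \<open>U X^c = \<Sum>\<^sub>i (b\<^sub>i - c\<^sub>i) X^(c + e\<^sub>i)\<close>, written through its coefficient
  at \<open>X^c\<close>, which comes from \<open>X^(c - e\<^sub>i)\<close>; hence the shift and the \<open>+ 1\<close>.\<close>

definition raise :: "('n::finite \<Rightarrow>\<^sub>0 nat) \<Rightarrow> ('n, 'a::field) mpoly \<Rightarrow> ('n, 'a) mpoly" where
  "raise b G = Abs_poly_mapping (\<lambda>c. \<Sum>i\<in>UNIV. if 0 < lookup c i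
      then of_int (int (lookup b i) - int (lookup c i) + 1) * lookup G (c - single i 1) else 0)"

lemma lookup_raise:
  "lookup (raise b G) c = (\<Sum>i\<in>UNIV. if 0 < lookup c i
      then of_int (int (lookup b i) - int (lookup c i) + 1) * lookup G (c - single i 1) else 0)"
  (is "_ = ?U c")
proof -
  have "{c. ?U c \<noteq> 0} \<subseteq> (\<Union>i. (\<lambda>x. x + single i 1) ` keys G)"
  proof
    fix c assume "c \<in> {c. ?U c \<noteq> 0}"
    then obtain i where i: "0 < lookup c i" "lookup G (c - single i 1) \<noteq> 0"
      by (auto elim: sum.not_neutral_contains_not_neutral split: if_splits)
    then have "c - single i 1 \<in> keys G" by (simp add: in_keys_iff)
    then show "c \<in> (\<Union>i. (\<lambda>x. x + single i 1) ` keys G)"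
      using diff_single_add_single[OF i(1)] by (metis UN_iff UNIV_I image_eqI)
  qed
  then have "finite {c. ?U c \<noteq> 0}" by (rule finite_subset) simp
  then show ?thesis unfolding raise_def by (simp add: lookup_Abs_poly_mapping)
qed

lemma raise_scalar_mult: "raise b (scalar u * G) = scalar u * raise b G"
  by (rule poly_mapping_eqI)
    (unfold lookup_scalar_mult lookup_raise, simp add: sum_distrib_left mult_ac if_distrib cong: if_cong)

lemma raise_zero [simp]: "raise b 0 = 0"
  using raise_scalar_mult[of b 0 0] by simp

lemma keys_raiseE:
  assumes "c \<in> keys (raise b G)"
  obtains i where "0 < lookup c i" "int (lookup c i) \<noteq> int (lookup b i) + 1" "c - single i 1 \<in> keys G"
proof -
  obtain i where i: "(if 0 < lookup c i then of_int (int (lookup b i) - int (lookup c i) + 1)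
      * lookup G (c - single i 1) else 0) \<noteq> 0"
    using assms unfolding in_keys_iff lookup_raise by (auto elim: sum.not_neutral_contains_not_neutral)
  then have pos: "0 < lookup c i" by metis
  then have "of_int (int (lookup b i) - int (lookup c i) + 1) * lookup G (c - single i 1) \<noteq> 0"
    using i by metis
  then show ?thesis
    by (intro that[OF pos]) (auto simp: in_keys_iff simp del: of_int_add of_int_diff of_int_of_nat_eq)
qed

lemma in_box_raise:
  assumes "in_box b G"
  shows "in_box b (raise b G)"
  unfolding in_box_def
proof (intro ballI allI)
  fix c j assume "c \<in> keys (raise b G)"
  then obtain i where i: "0 < lookup c i" "int (lookup c i) \<noteq> int (lookup b i) + 1" "c - single i 1 \<in> keys G"
    by (rule keys_raiseE)
  have "lookup (c - single i 1) j \<le> lookup b j" using assms i(3) unfolding in_box_def by blast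
  then show "lookup c j \<le> lookup b j"
    using i(1,2) by (cases "i = j") (auto simp: lookup_minus lookup_single when_def)
qed

lemma homog_raise:
  assumes "homog s G"
  shows "homog (s + 1) (raise b G)"
  unfolding homog_def
proof
  fix c assume "c \<in> keys (raise b G)"
  then obtain i where i: "0 < lookup c i" "c - single i 1 \<in> keys G"
    by (rule keys_raiseE)
  have "mdeg (c - single i 1) = s" using assms i(2) unfolding homog_def by blast
  then show "mdeg c = s + 1"
    using mdeg_add[of "c - single i 1" "single i 1"] unfolding diff_single_add_single[OF i(1)] mdeg_single
    by simp
qed

lemma homog_raise_iter: "homog s G \<Longrightarrow> homog (s + j) ((raise b ^^ j) G)"
  by (induction j) (auto dest: homog_raise)

lemma in_box_raise_iter: "in_box b G \<Longrightarrow> in_box b ((raise b ^^ j) G)"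
  by (induction j) (auto dest: in_box_raise)

lemma raise_commutator_summand:
  fixes G :: "('n::finite, 'a::field) mpoly"
  shows "of_nat (lookup c i + 1) * (if 0 < lookup (c + single i 1) k
        then of_int (int (lookup b k) - int (lookup (c + single i 1) k) + 1)
          * lookup G (c + single i 1 - single k 1) else 0)
    - (if 0 < lookup c k then of_int (int (lookup b k) - int (lookup c k) + 1)
        * (of_nat (lookup (c - single k 1) i + 1) * lookup G (c - single k 1 + single i 1)) else 0)
    = (if k = i then of_int (int (lookup b i) - 2 * int (lookup c i)) * lookup G c else 0)"
proof (cases "k = i")
  case True
  show ?thesis
  proof (cases "lookup c i = 0")
    case True
    then show ?thesis using \<open>k = i\<close> by (simp add: lookup_add lookup_single)
  next
    case False
    have "(of_nat (lookup c i + 1) * of_int (int (lookup b i) - int (lookup c i + 1) + 1)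
        - of_int (int (lookup b i) - int (lookup c i) + 1) * of_nat (lookup c i) :: 'a)
      = of_int ((int (lookup c i) + 1) * (int (lookup b i) - int (lookup c i + 1) + 1)
        - (int (lookup b i) - int (lookup c i) + 1) * int (lookup c i))"
      by simp
    also have "\<dots> = of_int (int (lookup b i) - 2 * int (lookup c i))"
      by (simp add: algebra_simps)
    finally show ?thesis
      using \<open>k = i\<close> False diff_single_add_single[of c i]
      by (simp add: lookup_add lookup_minus lookup_single algebra_simps)
  qed
next
  case False
  have "lookup (c + single i 1) k = lookup c k" "lookup (c - single k 1) i = lookup c i"
    "c + single i 1 - single k 1 = c - single k 1 + single i 1"
    using False by (auto simp: lookup_add lookup_minus lookup_single when_def intro!: poly_mapping_eqI)
  then show ?thesis using False by (simp add: mult_ac)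
qed

lemma lookup_act_ell_raise_commutator:
  fixes G :: "('n::finite, 'a::field) mpoly"
  shows "lookup (act ell (raise b G)) c - lookup (raise b (act ell G)) c =
    of_int (int (mdeg b) - 2 * int (mdeg c)) * lookup G c"
proof -
  define A where "A i k = of_nat (lookup c i + 1) * (if 0 < lookup (c + single i 1) k
      then of_int (int (lookup b k) - int (lookup (c + single i 1) k) + 1)
        * lookup G (c + single i 1 - single k 1) else (0::'a))" for i k
  define B where "B i k = (if 0 < lookup c k then of_int (int (lookup b k) - int (lookup c k) + 1)
      * (of_nat (lookup (c - single k 1) i + 1) * lookup G (c - single k 1 + single i 1)) else (0::'a))"
    for i k
  have "lookup (act ell (raise b G)) c = (\<Sum>i\<in>UNIV. \<Sum>k\<in>UNIV. A i k)"
    unfolding lookup_act_ell lookup_raise A_def by (simp add: sum_distrib_left if_distrib cong: if_cong)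
  moreover have "lookup (raise b (act ell G)) c = (\<Sum>i\<in>UNIV. \<Sum>k\<in>UNIV. B i k)"
    unfolding lookup_raise B_def lookup_act_ell
    by (subst sum.swap) (rule sum.cong; simp add: sum_distrib_left)
  ultimately have "lookup (act ell (raise b G)) c - lookup (raise b (act ell G)) c
      = (\<Sum>i\<in>UNIV. \<Sum>k\<in>UNIV. A i k - B i k)"
    by (simp add: sum_subtractf)
  also have "\<dots> = (\<Sum>i\<in>UNIV. of_int (int (lookup b i) - 2 * int (lookup c i)) * lookup G c)"
    unfolding A_def B_def raise_commutator_summand by simp
  also have "\<dots> = of_int (\<Sum>i\<in>UNIV. int (lookup b i) - 2 * int (lookup c i)) * lookup G c"
    by (simp add: sum_distrib_right)
  also have "(\<Sum>i\<in>UNIV. int (lookup b i) - 2 * int (lookup c i)) = int (mdeg b) - 2 * int (mdeg c)"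
    by (simp add: mdeg_def sum_subtractf sum_distrib_left)
  finally show ?thesis .
qed

lemma act_ell_raise:
  fixes G :: "('n::finite, 'a::field) mpoly"
  assumes "homog s G"
  shows "act ell (raise b G) = raise b (act ell G) + scalar (of_int (int (mdeg b) - 2 * int s)) * G"
proof (rule poly_mapping_eqI)
  fix c
  have "lookup G c \<noteq> 0 \<Longrightarrow> mdeg c = s"
    using assms by (auto simp: homog_def in_keys_iff)
  then have "of_int (int (mdeg b) - 2 * int (mdeg c)) * lookup G c = of_int (int (mdeg b) - 2 * int s) * lookup G c"
    by (cases "lookup G c = 0") auto
  then show "lookup (act ell (raise b G)) c = lookup (raise b (act ell G) + scalar (of_int (int (mdeg b) - 2 * int s)) * G) c"
    using lookup_act_ell_raise_commutator[of b G c] unfolding lookup_add lookup_scalar_mult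
    by (metis diff_eq_eq add.commute)
qed

lemma act_ell_raise_iter_Suc:
  fixes w :: "('n::finite, 'a::field) mpoly"
  assumes "homog s w" "act ell w = 0"
  shows "act ell ((raise b ^^ Suc j) w) =
    scalar (of_int ((int j + 1) * (int (mdeg b) - 2 * int s - int j))) * (raise b ^^ j) w"
proof (induction j)
  case 0
  show ?case using act_ell_raise[OF assms(1), of b] assms(2) by simp
next
  case (Suc j)
  let ?w = "(raise b ^^ Suc j) w"
  have "act ell ((raise b ^^ Suc (Suc j)) w) = act ell (raise b ?w)"
    by simp
  also have "\<dots> = raise b (act ell ?w) + scalar (of_int (int (mdeg b) - 2 * int (s + Suc j))) * ?w"
    by (rule act_ell_raise[OF homog_raise_iter[OF assms(1)]])
  also have "\<dots> = scalar (of_int ((int j + 1) * (int (mdeg b) - 2 * int s - int j))) * ?w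
      + scalar (of_int (int (mdeg b) - 2 * int (s + Suc j))) * ?w"
    unfolding Suc raise_scalar_mult by simp
  also have "\<dots> = scalar (of_int ((int j + 1) * (int (mdeg b) - 2 * int s - int j))
      + of_int (int (mdeg b) - 2 * int (s + Suc j))) * ?w"
    by (simp only: single_add distrib_right)
  also have "(of_int ((int j + 1) * (int (mdeg b) - 2 * int s - int j))
      + of_int (int (mdeg b) - 2 * int (s + Suc j)) :: 'a)
      = of_int ((int (Suc j) + 1) * (int (mdeg b) - 2 * int s - int (Suc j)))"
    unfolding of_int_add[symmetric] by (simp add: algebra_simps)
  finally show ?case .
qed

lemma act_ell_power_raise_iter:
  fixes w :: "('n::finite, 'a::field) mpoly"
  assumes "homog s w" "act ell w = 0"
  shows "act (ell ^ r) ((raise b ^^ r) w) =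
    scalar (\<Prod>j<r. of_int ((int j + 1) * (int (mdeg b) - 2 * int s - int j))) * w"
proof (induction r)
  case 0
  then show ?case by simp
next
  case (Suc r)
  have "act (ell ^ Suc r) ((raise b ^^ Suc r) w) = act (ell ^ r) (act ell ((raise b ^^ Suc r) w))"
    by (simp only: power_Suc2 act_mult)
  also have "\<dots> = scalar (of_int ((int r + 1) * (int (mdeg b) - 2 * int s - int r)))
      * act (ell ^ r) ((raise b ^^ r) w)"
    unfolding act_ell_raise_iter_Suc[OF assms] by (rule act_scalar_mult_right)
  also have "\<dots> = scalar (\<Prod>j<Suc r. of_int ((int j + 1) * (int (mdeg b) - 2 * int s - int j))) * w"
    unfolding Suc scalar_mult_scalar_mult by (simp add: mult.commute)
  finally show ?case .
qed

lemma sl2_coeff_nonzero: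
  assumes "2 * s + r \<le> m"
  shows "(\<Prod>j<r. of_int ((int j + 1) * (int m - 2 * int s - int j))) \<noteq> (0 :: 'a::field_char_0)"
proof -
  have "(int j + 1) * (int m - 2 * int s - int j) > 0" if "j < r" for j
    using that assms by (intro mult_pos_pos) auto
  then have "of_int ((int j + 1) * (int m - 2 * int s - int j)) \<noteq> (0 :: 'a)" if "j < r" for j
    using that by (simp only: of_int_eq_0_iff) (metis less_irrefl)
  then show ?thesis by (simp add: prod_zero_iff)
qed

section \<open>Hard Lefschetz for the box\<close>

lemma box_ell_power_surj_step:
  fixes v z :: "('n::finite, 'a::field_char_0) mpoly"
  assumes m: "2 * t + r \<le> mdeg b" and v: "homog t v" "in_box b v"
    and z: "homog (t + r + 1) z" "in_box b z" "act (ell ^ (r + 2)) z = act ell v"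
  shows "\<exists>y. homog (t + r) y \<and> in_box b y \<and> act (ell ^ r) y = v"
proof -
  txt \<open>Correcting \<open>v\<close> by \<open>\<ell>^(r+1) \<circ> z\<close> leaves a \<open>w\<close> killed by \<open>\<ell>\<close>, on which the
    \<open>sl\<^sub>2\<close>-identity inverts \<open>\<ell>^r\<close>.\<close>
  define w where "w = v - act (ell ^ (r + 1)) z"
  have "homog (t + r + 1 - (r + 1)) (act (ell ^ (r + 1)) z)"
    by (rule homog_act[OF homog_ell_power z(1)])
  then have hw: "homog t w" unfolding w_def using v(1) by (intro homog_diff) auto
  have bw: "in_box b w" unfolding w_def using v(2) z(2) by (intro in_box_diff in_box_act)
  have "act ell w = act ell v - act (ell * ell ^ (r + 1)) z"
    unfolding w_def act_diff_right act_mult ..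
  then have dw: "act ell w = 0" using z(3) by simp
  define P :: 'a where "P = (\<Prod>j<r. of_int ((int j + 1) * (int (mdeg b) - 2 * int t - int j)))"
  have P: "P \<noteq> 0" unfolding P_def by (rule sl2_coeff_nonzero[OF m])
  define y where "y = act ell z + scalar (inverse P) * (raise b ^^ r) w"
  have "homog (t + r + 1 - 1) (act ell z)" by (rule homog_act[OF homog_ell z(1)])
  then have hy: "homog (t + r) y"
    unfolding y_def by (auto intro: homog_add homog_scalar_mult homog_raise_iter[OF hw])
  have y_box: "in_box b y" unfolding y_def using z(2) bw
    by (intro in_box_add in_box_act in_box_scalar_mult in_box_raise_iter)
  have "act (ell ^ r) y = act (ell ^ r * ell) z + scalar (inverse P) * act (ell ^ r) ((raise b ^^ r) w)"
    unfolding y_def act_add_right act_scalar_mult_right act_mult ..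
  also have "\<dots> = act (ell ^ (r + 1)) z + w"
    unfolding act_ell_power_raise_iter[OF hw dw] P_def[symmetric] scalar_mult_scalar_mult
    using P by (simp add: mult.commute)
  also have "\<dots> = v" unfolding w_def by simp
  finally show ?thesis using hy y_box by blast
qed

lemma box_ell_power_surj:
  fixes v :: "('n::finite, 'a::field_char_0) mpoly"
  assumes "2 * t + r \<le> mdeg b" "homog t v" "in_box b v"
  shows "\<exists>y. homog (t + r) y \<and> in_box b y \<and> act (ell ^ r) y = v"
  using assms
proof (induction t arbitrary: r v)
  case 0
  have "act ell v = 0" by (rule act_homog_eq_zero[OF homog_ell 0(2)]) simp
  then show ?case using box_ell_power_surj_step[OF 0(1-3), of 0] by simp
next
  case (Suc t)
  have "homog (Suc t - 1) (act ell v)" by (rule homog_act[OF homog_ell Suc(3)])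
  moreover have "in_box b (act ell v)" using Suc(4) by (rule in_box_act)
  ultimately obtain z where "homog (t + (r + 2)) z" "in_box b z" "act (ell ^ (r + 2)) z = act ell v"
    using Suc(1)[of "r + 2" "act ell v"] Suc(2) by auto
  then show ?case by (intro box_ell_power_surj_step[OF Suc(2-4), of z]) auto
qed

lemma add_diff_eq_iff:
  fixes b c c' :: "'n \<Rightarrow>\<^sub>0 nat"
  assumes "\<forall>i. lookup c i \<le> lookup b i"
  shows "c' + (b - c) = b \<longleftrightarrow> c' = c"
proof
  assume "c' + (b - c) = b"
  then have sum_eq: "lookup c' i + (lookup b i - lookup c i) = lookup b i" for i
    by (metis lookup_add lookup_minus)
  have "lookup c' i = lookup c i" for i
    using sum_eq[of i] assms[rule_format, of i] by arith
  then show "c' = c" by (rule poly_mapping_eqI)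
next
  assume "c' = c"
  then show "c' + (b - c) = b" using assms by (auto intro!: poly_mapping_eqI simp: lookup_add lookup_minus)
qed

lemma deriv_coeff_nonzero:
  assumes "\<forall>i. lookup c i \<le> lookup b i"
  shows "deriv_coeff b (b - c) \<noteq> 0"
proof -
  have "0 < fact (lookup b i) div (fact (lookup b i - lookup (b - c) i) :: nat)" for i
    using assms by (simp add: lookup_minus div_greater_zero_iff fact_mono)
  then show ?thesis by (simp add: deriv_coeff_def)
qed

lemma act_single_monom:
  fixes u :: "'a::field"
  assumes "\<forall>i. lookup c i \<le> lookup b i"
  shows "act (single (b - c) u) (monom b :: ('n::finite, 'a) mpoly) = single c (u * of_nat (deriv_coeff b (b - c)))"
proof (rule poly_mapping_eqI)
  fix c'
  show "lookup (act (single (b - c) u) (monom b :: ('n, 'a) mpoly)) c' = lookup (single c (u * of_nat (deriv_coeff b (b - c)))) c'"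
    unfolding lookup_act_single monom_def using add_diff_eq_iff[OF assms, of c']
    by (auto simp: lookup_single when_def)
qed

lemma box_eq_act_monom:
  fixes G :: "('n::finite, 'a::field_char_0) mpoly"
  assumes "in_box b G" "homog k G"
  shows "\<exists>h. homog (mdeg b - k) h \<and> act h (monom b) = G"
proof -
  have le: "\<forall>i. lookup c i \<le> lookup b i" if "c \<in> keys G" for c
    using assms(1) that by (auto simp: in_box_def)
  define h where "h = (\<Sum>c\<in>keys G. single (b - c) (lookup G c / of_nat (deriv_coeff b (b - c))))"
  have "act h (monom b) = (\<Sum>c\<in>keys G. act (single (b - c) (lookup G c / of_nat (deriv_coeff b (b - c)))) (monom b))"
    unfolding h_def by (rule act_sum_left)
  also have "\<dots> = (\<Sum>c\<in>keys G. single c (lookup G c))"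
    by (rule sum.cong) (simp_all add: act_single_monom le deriv_coeff_nonzero)
  also have "\<dots> = G" by (rule poly_mapping_sum_single[symmetric])
  finally have "act h (monom b) = G" .
  moreover have "homog (mdeg b - k) h"
    unfolding h_def
  proof (rule homog_sum)
    fix c assume c: "c \<in> keys G"
    then have "mdeg (b - c) = mdeg b - k" using assms(2) mdeg_diff[OF le[OF c]] by (auto simp: homog_def)
    then show "homog (mdeg b - k) (single (b - c) (lookup G c / of_nat (deriv_coeff b (b - c))) :: ('n, 'a) mpoly)"
      by (metis homog_single)
  qed
  ultimately show ?thesis by blast
qed

lemma box_lefschetz:
  fixes v :: "('n::finite, 'a::field_char_0) mpoly"
  assumes "2 * t + r \<le> mdeg b" "homog t v" "in_box b v"
  obtains h where "homog (mdeg b - (t + r)) h" "act (ell ^ r * h) (monom b) = v"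
proof -
  obtain y where y: "homog (t + r) y" "in_box b y" "act (ell ^ r) y = v"
    using box_ell_power_surj[OF assms] by blast
  obtain h where h: "homog (mdeg b - (t + r)) h" "act h (monom b) = y"
    using box_eq_act_monom[OF y(2,1)] by blast
  have "act (ell ^ r * h) (monom b) = v"
    using h(2) y(3) by (simp add: act_mult)
  with h(1) show ?thesis by (rule that)
qed

lemma homog_eq_zero_if_act_single:
  fixes G :: "('n::finite, 'a::field_char_0) mpoly"
  assumes "homog k G" "\<And>a. mdeg a = k \<Longrightarrow> act (single a 1) G = 0"
  shows "G = 0"
proof (rule poly_mapping_eqI)
  fix a
  have "lookup G a = 0" if "mdeg a = k"
  proof -
    have "lookup (act (single a 1) G) 0 = lookup G a * of_nat (deriv_coeff a a)"
      by (simp add: lookup_act_single)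
    moreover have "deriv_coeff a a \<noteq> 0" by (simp add: deriv_coeff_def)
    ultimately show ?thesis using assms(2)[OF that] by simp
  qed
  then show "lookup G a = lookup 0 a"
    using assms(1) by (cases "lookup G a = 0") (auto simp: homog_def in_keys_iff)
qed

lemma act_ell_power_mult_injective:
  fixes f :: "('n::finite, 'a::field_char_0) mpoly" and b :: "'n \<Rightarrow>\<^sub>0 nat" and d i j :: nat
  defines "F \<equiv> act (ell ^ d) (monom b)"
  assumes "2 * i + d + j \<le> mdeg b" "homog i f" "act (ell ^ j * f) F = 0"
  shows "act f F = 0"
proof (rule homog_eq_zero_if_act_single)
  show "homog (mdeg b - d - i) (act f F)"
    unfolding F_def using homog_act[OF assms(3) homog_act[OF homog_ell_power homog_monom]] by simp
next
  fix a :: "'n \<Rightarrow>\<^sub>0 nat"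
  assume a: "mdeg a = mdeg b - d - i"
  define v where "v = act (ell ^ d * single a 1) (monom b :: ('n, 'a) mpoly)"
  have "homog (mdeg b - (d + mdeg a)) v"
    unfolding v_def by (intro homog_act homog_monom homog_mult homog_ell_power homog_single)
  then have v_homog: "homog i v" using a assms(2) by simp
  have v_box: "in_box b v" unfolding v_def by (intro in_box_act in_box_monom)
  obtain h where "homog (mdeg b - (i + (d + j))) h" and h: "act (ell ^ (d + j) * h) (monom b) = v"
    by (rule box_lefschetz[where r = "d + j", OF _ v_homog v_box]) (use assms(2) in simp)
  have "act (single a 1) (act f F) = act f v"
    unfolding F_def v_def by (simp add: act_mult[symmetric] mult_ac)
  also have "\<dots> = act h (act (ell ^ j * f) F)"
    unfolding F_def h[symmetric] by (simp add: act_mult[symmetric] mult_ac power_add)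
  also have "\<dots> = 0" using assms(4) by simp
  finally show "act (single a 1) (act f F) = 0" .
qed

lemma act_ell_power_mult_surjective:
  fixes g :: "('n::finite, 'a::field_char_0) mpoly" and b :: "'n \<Rightarrow>\<^sub>0 nat" and d i j :: nat
  defines "F \<equiv> act (ell ^ d) (monom b)"
  assumes "mdeg b \<le> 2 * i + d + j" "homog (i + j) g"
  obtains f where "homog i f" "act (ell ^ j * f) F = act g F"
proof (cases "i + j + d \<le> mdeg b")
  case large: False
  have "act g F = 0"
  proof (cases "d \<le> mdeg b")
    case True
    have "homog (mdeg b - d) F" unfolding F_def by (rule homog_act[OF homog_ell_power homog_monom])
    moreover have "mdeg b - d < i + j" using True large by linarith
    ultimately show ?thesis by (rule act_homog_eq_zero[OF assms(3)])
  next
    case False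
    then have "F = 0" unfolding F_def by (intro act_homog_eq_zero[OF homog_ell_power homog_monom]) simp
    then show ?thesis by simp
  qed
  then show ?thesis by (intro that[of 0]) simp_all
next
  case True
  have "2 * (mdeg b - d - (i + j)) + (d + j) \<le> mdeg b" using True assms(2) by linarith
  moreover have "homog (mdeg b - d - (i + j)) (act g F)"
    unfolding F_def using homog_act[OF assms(3) homog_act[OF homog_ell_power homog_monom]] by simp
  moreover have "in_box b (act g F)" unfolding F_def by (intro in_box_act in_box_monom)
  ultimately obtain f where "homog (mdeg b - (mdeg b - d - (i + j) + (d + j))) f"
      "act (ell ^ (d + j) * f) (monom b) = act g F"
    by (rule box_lefschetz)
  moreover have "mdeg b - (mdeg b - d - (i + j) + (d + j)) = i" using True by simp
  moreover have "act (ell ^ (d + j) * f) (monom b) = act (ell ^ j * f) F"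
    unfolding F_def by (simp add: act_mult[symmetric] mult_ac power_add)
  ultimately show ?thesis by (intro that[of f]) simp_all
qed

theorem SLP_quot_Ann_act_ell_power_monom:
  "SLP_quot (Ann (act (ell ^ d) (monom b) :: ('n::finite, 'a::field_char_0) mpoly))"
proof -
  define F :: "('n, 'a) mpoly" where "F = act (ell ^ d) (monom b)"
  have "(\<forall>f. homog i f \<and> ell ^ j * f \<in> Ann F \<longrightarrow> f \<in> Ann F) \<or>
      (\<forall>g. homog (i + j) g \<longrightarrow> (\<exists>f. homog i f \<and> g - ell ^ j * f \<in> Ann F))" for i j
  proof (cases "2 * i + d + j \<le> mdeg b")
    case True
    then show ?thesis
      unfolding F_def Ann_def using act_ell_power_mult_injective[OF True] by blast
  next
    case False
    have "\<exists>f. homog i f \<and> g - ell ^ j * f \<in> Ann F" if g: "homog (i + j) g" for g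
    proof -
      obtain f where "homog i f" "act (ell ^ j * f) F = act g F"
        unfolding F_def by (rule act_ell_power_mult_surjective) (use False g in auto)
      then show ?thesis by (auto simp: Ann_def act_diff_left)
    qed
    then show ?thesis by blast
  qed
  then show ?thesis unfolding SLP_quot_def F_def using homog_ell by blast
qed

section \<open>Elementary symmetric polynomials\<close>

definition exp_of_set :: "'n set \<Rightarrow> ('n \<Rightarrow>\<^sub>0 nat)" where
  "exp_of_set T = (\<Sum>i\<in>T. single i 1)"

definition zero_one :: "('n \<Rightarrow>\<^sub>0 nat) \<Rightarrow> bool" where
  "zero_one c \<longleftrightarrow> (\<forall>i. lookup c i \<le> 1)"

lemma lookup_exp_of_set: "lookup (exp_of_set T) j = (if j \<in> (T :: 'n::finite set) then 1 else 0)"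
  unfolding exp_of_set_def lookup_sum by (simp add: lookup_single when_def)

lemma zero_one_exp_of_set: "zero_one (exp_of_set (T :: 'n::finite set))"
  by (simp add: zero_one_def lookup_exp_of_set)

lemma exp_of_set_eq_iff:
  assumes "zero_one c"
  shows "exp_of_set T = c \<longleftrightarrow> T = {i :: 'n::finite. lookup c i = 1}"
proof
  assume "exp_of_set T = c"
  then show "T = {i. lookup c i = 1}" by (auto simp: lookup_exp_of_set split: if_splits)
next
  assume "T = {i. lookup c i = 1}"
  then show "exp_of_set T = c"
    using assms by (auto intro!: poly_mapping_eqI simp: lookup_exp_of_set zero_one_def le_Suc_eq)
qed

lemma mdeg_exp_of_set: "mdeg (exp_of_set (T :: 'n::finite set)) = card T"
  unfolding mdeg_def lookup_exp_of_set by (simp add: sum.If_cases)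

lemma mdeg_zero_one:
  assumes "zero_one c"
  shows "mdeg c = card {i :: 'n::finite. lookup c i = 1}"
  by (metis exp_of_set_eq_iff[OF assms] mdeg_exp_of_set)

lemma lookup_elem_sym:
  "lookup (elem_sym d :: ('n::finite, 'a::field) mpoly) c = (if zero_one c \<and> mdeg c = d then 1 else 0)"
proof -
  have "lookup (elem_sym d :: ('n, 'a) mpoly) c = (\<Sum>T\<in>{T. card T = d}. if exp_of_set T = c then 1 else 0)"
    unfolding elem_sym_def lookup_sum monom_def exp_of_set_def[symmetric] by (simp add: lookup_single when_def)
  also have "\<dots> = (if zero_one c \<and> mdeg c = d then 1 else 0)"
  proof (cases "zero_one c")
    case True
    then show ?thesis by (simp add: exp_of_set_eq_iff mdeg_zero_one)
  next
    case False
    then have "exp_of_set T \<noteq> c" for T using zero_one_exp_of_set by metis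
    then show ?thesis using False by simp
  qed
  finally show ?thesis .
qed

lemma zero_one_add_single: "zero_one (c + single i 1) \<longleftrightarrow> zero_one c \<and> lookup c i = 0"
proof -
  have l: "lookup (c + single i 1) j = lookup c j + (if i = j then 1 else 0)" for j
    by (simp add: lookup_add lookup_single when_def)
  show ?thesis
  proof
    assume h: "zero_one (c + single i 1)"
    have "lookup c j \<le> 1" for j using h[unfolded zero_one_def, rule_format, of j] l[of j] by linarith
    moreover have "lookup c i = 0" using h[unfolded zero_one_def, rule_format, of i] l[of i] by simp
    ultimately show "zero_one c \<and> lookup c i = 0" by (simp add: zero_one_def)
  next
    assume "zero_one c \<and> lookup c i = 0"
    then show "zero_one (c + single i 1)" using l by (auto simp: zero_one_def)
  qed
qed

lemma act_ell_elem_sym_Suc: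
  "act ell (elem_sym (Suc d) :: ('n::finite, 'a::field) mpoly) = scalar (of_nat (card (UNIV :: 'n set) - d)) * elem_sym d"
proof (rule poly_mapping_eqI)
  fix c
  have "lookup (act ell (elem_sym (Suc d) :: ('n, 'a) mpoly)) c =
      (\<Sum>i\<in>UNIV. if zero_one c \<and> mdeg c = d \<and> lookup c i = 0 then 1 else 0)"
    unfolding lookup_act_ell lookup_elem_sym zero_one_add_single mdeg_add mdeg_single
    by (rule sum.cong) auto
  also have "\<dots> = (if zero_one c \<and> mdeg c = d then of_nat (card {i. lookup c i = 0}) else 0)"
    by (auto simp: sum.If_cases)
  also have "\<dots> = lookup (scalar (of_nat (card (UNIV :: 'n set) - d)) * elem_sym d :: ('n, 'a) mpoly) c"
  proof -
    have "zero_one c \<Longrightarrow> {i. lookup c i = 0} = UNIV - {i. lookup c i = 1}"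
      by (auto simp: zero_one_def le_Suc_eq)
    then show ?thesis
      unfolding lookup_scalar_mult lookup_elem_sym by (auto simp: card_Diff_subset mdeg_zero_one)
  qed
  finally show "lookup (act ell (elem_sym (Suc d) :: ('n, 'a) mpoly)) c =
      lookup (scalar (of_nat (card (UNIV :: 'n set) - d)) * elem_sym d :: ('n, 'a) mpoly) c" .
qed

lemma act_ell_power_elem_sym_card:
  "r \<le> card (UNIV :: 'n set) \<Longrightarrow> act (ell ^ r) (elem_sym (card (UNIV :: 'n set)) :: ('n::finite, 'a::field) mpoly) =
    scalar (of_nat (fact r)) * elem_sym (card (UNIV :: 'n set) - r)"
proof (induction r)
  case 0
  then show ?case by simp
next
  case (Suc r)
  then have "card (UNIV :: 'n set) - r = Suc (card (UNIV :: 'n set) - Suc r)" by simp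
  then have "act (ell ^ Suc r) (elem_sym (card (UNIV :: 'n set)) :: ('n, 'a) mpoly) =
      scalar (of_nat (fact r)) * (scalar (of_nat (card (UNIV :: 'n set) - (card (UNIV :: 'n set) - Suc r))) * elem_sym (card (UNIV :: 'n set) - Suc r))"
    using Suc by (simp del: single_of_nat add: act_mult act_scalar_mult_right act_ell_elem_sym_Suc)
  also have "\<dots> = scalar (of_nat (fact (Suc r))) * elem_sym (card (UNIV :: 'n set) - Suc r)"
    unfolding scalar_mult_scalar_mult using Suc(2) by (simp del: single_of_nat add: algebra_simps)
  finally show ?case .
qed

lemma elem_sym_card: "elem_sym (card (UNIV :: 'n set)) = (monom (exp_of_set UNIV) :: ('n::finite, 'a::field) mpoly)"
proof -
  have "card T = card (UNIV :: 'n set) \<longleftrightarrow> T = UNIV" for T :: "'n set"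
    using card_eq_UNIV_imp_eq_UNIV[of T] by auto
  then have "{T :: 'n set. card T = card (UNIV :: 'n set)} = {UNIV}"
    by auto
  then show ?thesis unfolding elem_sym_def exp_of_set_def by simp
qed

lemma Ann_scalar_mult:
  fixes G :: "('n::finite, 'a::field) mpoly"
  assumes "u \<noteq> 0"
  shows "Ann (scalar u * G) = Ann G"
proof -
  have "scalar u * X = 0 \<longleftrightarrow> X = (0 :: ('n, 'a) mpoly)" for X
    using assms by (metis lookup_scalar_mult lookup_zero mult_eq_0_iff poly_mapping_eqI)
  then show ?thesis unfolding Ann_def act_scalar_mult_right by simp
qed

theorem SLP_quot_Ann_elem_sym:
  assumes "d \<le> card (UNIV :: 'n::finite set)"
  shows "SLP_quot (Ann (elem_sym d :: ('n, 'a::field_char_0) mpoly))"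
proof -
  have "card (UNIV :: 'n set) - (card (UNIV :: 'n set) - d) = d" using assms by simp
  then have "act (ell ^ (card (UNIV :: 'n set) - d)) (monom (exp_of_set UNIV) :: ('n, 'a) mpoly) =
      scalar (of_nat (fact (card (UNIV :: 'n set) - d))) * elem_sym d"
    using act_ell_power_elem_sym_card[of "card (UNIV :: 'n set) - d", OF diff_le_self]
    by (simp only: elem_sym_card)
  then have "Ann (elem_sym d :: ('n, 'a) mpoly) = Ann (act (ell ^ (card (UNIV :: 'n set) - d)) (monom (exp_of_set UNIV)))"
    by (simp del: single_of_nat add: Ann_scalar_mult)
  then show ?thesis using SLP_quot_Ann_act_ell_power_monom by simp
qed

theorem mainTheorem5:
  shows "(\<forall>(b::'n \<Rightarrow>\<^sub>0 nat) (d::nat).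
            SLP_quot (Ann (act ((\<Sum>i\<in>UNIV. var i :: ('n, 'a::field_char_0) mpoly) ^ d) (monom b))))
       \<and> (\<forall>d\<le>card (UNIV :: 'n::finite set). SLP_quot (Ann (elem_sym d :: ('n, 'a::field_char_0) mpoly)))"
  using SLP_quot_Ann_act_ell_power_monom[where 'a='a and 'n='n] SLP_quot_Ann_elem_sym[where 'a='a and 'n='n]
  unfolding ell_def by blast

end
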